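(* Let $G$ be a group and $S\subseteq G$ a locally maximal product-free set with $|S|=3$ such that every two-element subset of $S$ generates $\langle S\rangle$ and $S$ contains exactly one involution. Then either $|G|\leq 24$, or $S=\{a,b,c\}$ where $a$ and $b$ have order $3$ and $c$ is an involution.
   Context: A non-empty subset $S$ of a group $G$ is product-free if $ab \notin S$ for all $a, b \in S$. It is locally maximal product-free if it is product-free and is not properly contained in any other product-free subset of $G$. $\langle S \rangle$ denotes the subgroup generated by $S$. An involution is an element of order $2$. *)

theory Defs
  imports "HOL-Algebra.Algebra"
begin

definition product_free :: "('a, 'b) monoid_scheme \<Rightarrow> 'a set \<Rightarrow> bool" where
  "product_free G S \<longleftrightarrow> S \<noteq> {} \<and> S \<subseteq> carrier G \<and>
     (\<forall>a\<in>S. \<forall>b\<in>S. a \<otimes>\<^bsub>G\<^esub> b \<notin> S)"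

definition locally_maximal_product_free :: "('a, 'b) monoid_scheme \<Rightarrow> 'a set \<Rightarrow> bool" where
  "locally_maximal_product_free G S \<longleftrightarrow> product_free G S \<and>
     (\<forall>T. product_free G T \<and> S \<subseteq> T \<longrightarrow> T = S)"

definition involution :: "('a, 'b) monoid_scheme \<Rightarrow> 'a \<Rightarrow> bool" where
  "involution G x \<longleftrightarrow> x \<in> carrier G \<and> group.ord G x = 2"

end

theory Submission
  imports Defs
begin

text \<open>
  Write \<open>S = {a, b, c}\<close> with \<open>c\<close> the involution. Local maximality applied to \<open>a\<inverse>\<close> and
  \<open>b\<inverse>\<close> shows that either \<open>a\<close> and \<open>b\<close> both have order 3, or one of them is \<open>g\<inverse>\<close> or
  \<open>g\<^sup>-\<^sup>2\<close> for the other one, \<open>g\<close>. In the latter case the generation hypotheses put \<open>c\<close> into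
  \<open>H = \<langle>g\<rangle>\<close>, so \<open>|g| = 2m\<close> and \<open>c = g\<^sup>m\<close>, and the conditions that \<open>S\<close> be product-free
  and that every element of \<open>H\<close> be covered by \<open>S\<close> leave only \<open>(e, m) = (-1, 3), (-1, 4), (-2, 5)\<close>
  for \<open>S = {g, g\<^sup>e, g\<^sup>m}\<close>.

  Each \<open>y \<notin> H\<close> has \<open>(y h)\<^sup>2 \<in> S\<close> for all \<open>h \<in> H\<close>; in particular \<open>y\<close> normalises \<open>H\<close>.
  For \<open>|H| = 8, 10\<close> this forces \<open>y\<close> to invert \<open>g\<close>, so \<open>H\<close> has index at most 2. For
  \<open>|H| = 6\<close>, \<open>S\<close> is the set of odd powers of \<open>g\<close>, commutators of elements outside \<open>H\<close> are odd
  powers of \<open>g\<close>, and this parity rules out a fifth coset of \<open>H\<close>. Hence \<open>|G| \<le> 4 \<cdot> 6 = 24\<close>.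
\<close>

lemma int_dvd_double_not_dvd:
  fixes N k :: int
  assumes "0 \<le> N" "N dvd 2 * k" "\<not> N dvd k"
  shows "\<exists>m>0. N = 2 * m \<and> N dvd (k - m)"
proof -
  obtain t where t: "2 * k = N * t" using assms(2) by (auto simp: dvd_def)
  have "odd t"
  proof
    assume "even t"
    then have "k = N * (t div 2)" using t by auto
    then show False using assms(3) by simp
  qed
  then obtain s where s: "t = 2 * s + 1" by (metis oddE)
  define m where "m = k - N * s"
  have N: "N = 2 * m" using t s by (simp add: m_def algebra_simps)
  have "m \<noteq> 0" using assms(2,3) N by auto
  moreover have "k - m = N * s" by (simp add: m_def)
  ultimately show ?thesis using N assms(1) by auto
qed

lemma int_dvd_iff_eq_0_of_bounds:
  fixes N x :: int
  assumes "- N < x" "x < N"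
  shows "N dvd x \<longleftrightarrow> x = 0"
proof
  assume "N dvd x"
  show "x = 0"
  proof (rule ccontr)
    assume "x \<noteq> 0"
    then have "\<bar>N\<bar> \<le> \<bar>x\<bar>" using dvd_imp_le_int \<open>N dvd x\<close> by blast
    then show False using assms by linarith
  qed
qed simp

lemma no_progression_mod_8:
  fixes s t :: int
  assumes "s \<in> {1, -1, 4}" "t \<in> {1, -1, 4}"
    "\<exists>i\<in>{1, -1, 4}. 8 dvd 2 * t - s - i" "\<exists>i\<in>{1, -1, 4}. 8 dvd 3 * t - 2 * s - i"
  shows "s = t"
  using assms by auto

lemma no_progression_mod_10:
  fixes s t :: int
  assumes "s \<in> {1, -2, 5}" "t \<in> {1, -2, 5}"
    "\<exists>i\<in>{1, -2, 5}. 10 dvd 2 * t - s - i" "\<exists>i\<in>{1, -2, 5}. 10 dvd 3 * t - 2 * s - i"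
  shows "s = t"
  using assms by auto

definition commutator :: "('a, 'b) monoid_scheme \<Rightarrow> 'a \<Rightarrow> 'a \<Rightarrow> 'a" where
  "commutator G x y = x \<otimes>\<^bsub>G\<^esub> y \<otimes>\<^bsub>G\<^esub> inv\<^bsub>G\<^esub> x \<otimes>\<^bsub>G\<^esub> inv\<^bsub>G\<^esub> y"

context group begin

lemma inv_m_cancel_left [simp]: "x \<in> carrier G \<Longrightarrow> z \<in> carrier G \<Longrightarrow> inv x \<otimes> (x \<otimes> z) = z"
  by (simp add: m_assoc [symmetric])

lemma m_inv_cancel_left [simp]: "x \<in> carrier G \<Longrightarrow> z \<in> carrier G \<Longrightarrow> x \<otimes> (inv x \<otimes> z) = z"
  by (simp add: m_assoc [symmetric])

lemma int_pow_two: "x \<in> carrier G \<Longrightarrow> x [^] (2::int) = x \<otimes> x"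
  by (metis int_pow_int nat_pow_Suc nat_pow_0 l_one numeral_2_eq_2 of_nat_numeral)

lemma int_pow_eq_iff_dvd_diff:
  "x \<in> carrier G \<Longrightarrow> x [^] (i::int) = x [^] (j::int) \<longleftrightarrow> int (ord x) dvd (i - j)"
  using int_pow_eq dvd_diff_commute by blast

lemma ord_eq_prime:
  assumes "x \<in> carrier G" "x \<noteq> \<one>" "Factorial_Ring.prime p" "x [^] p = \<one>"
  shows "ord x = p"
proof -
  have "ord x dvd p" using assms by (simp add: pow_eq_id)
  moreover have "ord x \<noteq> 1" using assms ord_eq_1 by blast
  ultimately show ?thesis using assms(3)[unfolded prime_nat_iff] by blast
qed

lemma conj_int_pow:
  assumes "x \<in> carrier G" "y \<in> carrier G"
  shows "y \<otimes> x [^] (k::int) \<otimes> inv y = (y \<otimes> x \<otimes> inv y) [^] k"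
proof -
  have "(\<lambda>x. y \<otimes> x \<otimes> inv y) \<in> hom G G"
    using assms(2) by (intro homI) (auto simp: m_assoc)
  then show ?thesis using hom_int_pow[of _ G G x k] assms(1) is_group by simp
qed

lemma square_of_product:
  assumes "p \<in> carrier G" "q \<in> carrier G"
  shows "(p \<otimes> q) \<otimes> (p \<otimes> q) = commutator G p q \<otimes> (q \<otimes> (p \<otimes> p) \<otimes> inv q) \<otimes> (q \<otimes> q)"
  using assms by (simp add: commutator_def m_assoc)

lemma commutator_mult_right:
  assumes "y \<in> carrier G" "z \<in> carrier G" "w \<in> carrier G"
  shows "commutator G y (z \<otimes> w) = commutator G y z \<otimes> (z \<otimes> commutator G y w \<otimes> inv z)"
  using assms by (simp add: commutator_def m_assoc inv_mult_group)

lemma card_set_mult_le: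
  assumes "finite A" "finite H"
  shows "finite (A <#> H) \<and> card (A <#> H) \<le> card A * card H"
proof -
  have AH: "A <#> H = (\<lambda>(a, h). a \<otimes> h) ` (A \<times> H)" unfolding set_mult_def by auto
  have "card (A <#> H) \<le> card (A \<times> H)" unfolding AH by (rule card_image_le) (use assms in simp)
  then show ?thesis using assms by (simp add: AH card_cartesian_product)
qed

lemma carrier_subset_set_mult_of_l_cosets:
  assumes "\<And>z. z \<in> carrier G \<Longrightarrow> \<exists>a\<in>A. z \<in> a <# H"
  shows "carrier G \<subseteq> A <#> H"
  using assms unfolding set_mult_def l_coset_def by blast

lemma l_coset_of_square_mem:
  assumes H: "subgroup H G" and x: "x \<in> carrier G" "x \<otimes> x \<in> H"
    and v: "v \<in> carrier G" "x \<otimes> v \<in> H"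
  shows "v \<in> x <# H"
proof -
  have "v = x \<otimes> (inv (x \<otimes> x) \<otimes> (x \<otimes> v))"
    using x v by (simp add: inv_mult_group m_assoc)
  moreover have "inv (x \<otimes> x) \<otimes> (x \<otimes> v) \<in> H"
    using H x v by (simp add: subgroup.m_closed subgroup.m_inv_closed)
  ultimately show ?thesis unfolding l_coset_def by blast
qed

lemma inv_mult_mem_of_conj_inverts:
  assumes H: "subgroup H G" and g: "g \<in> H" "g \<otimes> g \<noteq> \<one>"
    and inverts: "\<And>y. y \<in> carrier G \<Longrightarrow> y \<notin> H \<Longrightarrow> y \<otimes> g \<otimes> inv y = inv g"
    and y: "y \<in> carrier G" "y \<notin> H" and z: "z \<in> carrier G" "z \<notin> H"
  shows "inv y \<otimes> z \<in> H"
proof (rule ccontr)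
  assume w: "inv y \<otimes> z \<notin> H"
  have gG: "g \<in> carrier G" using subgroup.mem_carrier[OF H g(1)] .
  have iy: "inv y \<notin> H" using subgroup.m_inv_closed[OF H, of "inv y"] y by auto
  have "inv y \<otimes> z \<otimes> g \<otimes> inv (inv y \<otimes> z) = inv y \<otimes> (z \<otimes> g \<otimes> inv z) \<otimes> inv (inv y)"
    using y z gG by (simp add: m_assoc inv_mult_group)
  also have "\<dots> = inv (inv y \<otimes> g \<otimes> inv (inv y))"
    using y z gG inverts by (simp add: m_assoc inv_mult_group)
  also have "\<dots> = g" using inverts[OF inv_closed[OF y(1)] iy] gG by simp
  finally have "inv g = g" using inverts[of "inv y \<otimes> z"] w y z by simp
  then have "g \<otimes> g = g \<otimes> inv g" by simp
  then show False using g(2) gG by simp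
qed

lemma square_eq_one_in_generate_single:
  assumes g: "g \<in> carrier G" and c: "c \<in> generate G {g}" "c \<otimes> c = \<one>" "c \<noteq> \<one>"
  shows "\<exists>m>0. int (ord g) = 2 * m \<and> c = g [^] m"
proof -
  obtain k where k: "c = g [^] (k::int)" using c(1) generate_pow[OF g] by blast
  have "g [^] (2 * k) = \<one>" using c(2) int_pow_mult[OF g, of k k] by (simp add: k)
  then have "int (ord g) dvd 2 * k" by (simp add: int_pow_eq_id[OF g])
  moreover have "\<not> int (ord g) dvd k" using c(3) g by (simp add: k int_pow_eq_id)
  ultimately obtain m where m: "m > 0" "int (ord g) = 2 * m" "int (ord g) dvd (k - m)"
    using int_dvd_double_not_dvd[of "int (ord g)" k] by auto
  then have "c = g [^] m" using g by (simp add: k int_pow_eq dvd_diff_commute)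
  then show ?thesis using m by blast
qed

lemma not_in_generate_of_even_powers:
  assumes g: "g \<in> carrier G" "even (ord g)" and A: "A \<subseteq> generate G {g \<otimes> g}"
  shows "g \<notin> generate G A"
proof
  assume "g \<in> generate G A"
  also have "generate G A \<subseteq> generate G {g \<otimes> g}"
    using A g by (intro generate_subgroup_incl generate_is_subgroup) auto
  also have "\<dots> = {g [^] (2 * k) | k::int. k \<in> UNIV}"
    using g by (simp add: generate_pow int_pow_pow flip: int_pow_two)
  finally obtain k :: int where "g [^] (1::int) = g [^] (2 * k)" using g by auto
  then have "int (ord g) dvd 2 * k - 1" using int_pow_eq[OF g(1), of 1 "2 * k"] by simp
  moreover have "(2::int) dvd int (ord g)" using g(2) by simp
  ultimately have "(2::int) dvd 2 * k - 1" by (rule dvd_trans[rotated])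
  then show False by presburger
qed

section \<open>Locally maximal product-free sets\<close>

lemma product_free_one_notin:
  assumes "product_free G S"
  shows "\<one> \<notin> S"
  using assms unfolding product_free_def by force

lemma locally_maximal_product_free_cover:
  assumes lm: "locally_maximal_product_free G S" and z: "z \<in> carrier G"
  shows "z \<in> S \<or> z \<otimes> z \<in> S \<or> (\<exists>s\<in>S. \<exists>t\<in>S. z = s \<otimes> t \<or> z \<otimes> s = t \<or> s \<otimes> z = t)"
proof (rule ccontr)
  assume not_covered: "\<not> ?thesis"
  have pf: "product_free G S" using lm unfolding locally_maximal_product_free_def by blast
  then have S: "S \<subseteq> carrier G" "S \<noteq> {}" and one: "\<one> \<notin> S"
    using product_free_one_notin unfolding product_free_def by blast+
  have "z \<noteq> \<one>" using not_covered S by fastforce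
  then have "product_free G (insert z S)"
    using pf not_covered z S unfolding product_free_def by (auto simp: subset_iff)
  then show False
    using lm not_covered unfolding locally_maximal_product_free_def by blast
qed

lemma lmpf_square_mem_of_notin_subgroup:
  assumes lm: "locally_maximal_product_free G S" and H: "subgroup H G" "S \<subseteq> H"
    and y: "y \<in> carrier G" "y \<notin> H"
  shows "y \<otimes> y \<in> S"
proof -
  have SG: "S \<subseteq> carrier G" using H subgroup.subset by blast
  have "y \<noteq> s \<otimes> t \<and> y \<otimes> s \<noteq> t \<and> s \<otimes> y \<noteq> t" if st: "s \<in> S" "t \<in> S" for s t
  proof -
    have sG: "s \<in> carrier G" and tG: "t \<in> carrier G" using st SG by auto
    have "s \<otimes> t \<in> H" "t \<otimes> inv s \<in> H" "inv s \<otimes> t \<in> H"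
      using st H by (auto intro: subgroup.m_closed subgroup.m_inv_closed)
    moreover have "y \<otimes> s = t \<Longrightarrow> y = t \<otimes> inv s" "s \<otimes> y = t \<Longrightarrow> y = inv s \<otimes> t"
      using y(1) sG tG by (auto simp: inv_solve_left inv_solve_right)
    ultimately show ?thesis using y(2) by metis
  qed
  then show ?thesis
    using locally_maximal_product_free_cover[OF lm y(1)] y H by blast
qed

lemma lmpf_square_mem_subgroup:
  assumes lm: "locally_maximal_product_free G S" and H: "subgroup H G" "S \<subseteq> H"
    and y: "y \<in> carrier G"
  shows "y \<otimes> y \<in> H"
proof (cases "y \<in> H")
  case True
  then show ?thesis using H(1) by (simp add: subgroup.m_closed)
next
  case False
  then show ?thesis using lmpf_square_mem_of_notin_subgroup[OF assms] H(2) by blast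
qed

lemma lmpf_subgroup_normal:
  assumes lm: "locally_maximal_product_free G S" and H: "subgroup H G" "S \<subseteq> H"
  shows "H \<lhd> G"
  unfolding normal_inv_iff
proof (intro conjI ballI H(1))
  fix y h assume y: "y \<in> carrier G" and h: "h \<in> H"
  have hG: "h \<in> carrier G" using subgroup.mem_carrier[OF H(1) h] .
  show "y \<otimes> h \<otimes> inv y \<in> H"
  proof (cases "y \<in> H")
    case True
    then show ?thesis
      using h by (intro subgroup.m_closed[OF H(1)] subgroup.m_inv_closed[OF H(1)])
  next
    case False
    have "y \<otimes> h \<notin> H"
    proof
      assume "y \<otimes> h \<in> H"
      then have "y \<otimes> h \<otimes> inv h \<in> H"
        using h by (simp add: subgroup.m_closed[OF H(1)] subgroup.m_inv_closed[OF H(1)])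
      then show False using False y hG by (simp add: m_assoc)
    qed
    then have "(y \<otimes> h) \<otimes> (y \<otimes> h) \<in> H" "y \<otimes> y \<in> H"
      using lmpf_square_mem_subgroup[OF assms] y hG by auto
    moreover have "y \<otimes> h \<otimes> inv y = ((y \<otimes> h) \<otimes> (y \<otimes> h)) \<otimes> inv h \<otimes> inv (y \<otimes> y)"
      using y hG by (simp add: m_assoc inv_mult_group)
    ultimately show ?thesis
      using h H by (simp add: subgroup.m_closed[OF H(1)] subgroup.m_inv_closed[OF H(1)])
  qed
qed

lemma lmpf_inv_cases:
  assumes lm: "locally_maximal_product_free G {a, b, c}"
    and c: "c \<otimes> c = \<one>" and a: "a \<otimes> a \<noteq> \<one>"
  shows "a \<otimes> a \<otimes> a = \<one> \<or> b = inv a \<or> b = inv (a \<otimes> a) \<or> a = inv (b \<otimes> b)"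
proof -
  let ?S = "{a, b, c}"
  have pf: "product_free G ?S" using lm unfolding locally_maximal_product_free_def by blast
  then have G: "a \<in> carrier G" "b \<in> carrier G" "c \<in> carrier G" and one: "\<one> \<notin> ?S"
    and closed: "\<And>x y. x \<in> ?S \<Longrightarrow> y \<in> ?S \<Longrightarrow> x \<otimes> y \<notin> ?S"
    using product_free_one_notin unfolding product_free_def by auto
  have inv_c: "inv c = c" using c G by (simp add: inv_equality)
  have aa: "a \<otimes> a \<noteq> c" using closed by blast
  consider (mem) "inv a \<in> ?S" | (square) "inv (a \<otimes> a) \<in> ?S"
    | (prod) s t where "s \<in> ?S" "t \<in> ?S" "a \<otimes> (s \<otimes> t) = \<one>"
    | (quot) s t where "s \<in> ?S" "t \<in> ?S" "s = a \<otimes> t \<or> s = t \<otimes> a"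
  proof -
    have SG: "?S \<subseteq> carrier G" using G by blast
    have "inv a \<otimes> inv a = inv (a \<otimes> a)" using G by (simp add: inv_mult_group)
    moreover have "inv a = s \<otimes> t \<Longrightarrow> a \<otimes> (s \<otimes> t) = \<one>" for s t using G by (metis r_inv)
    moreover have "inv a \<otimes> s = t \<Longrightarrow> s = a \<otimes> t" "s \<otimes> inv a = t \<Longrightarrow> s = t \<otimes> a"
      if "s \<in> ?S" "t \<in> ?S" for s t
      using that SG G(1) by (auto simp: inv_solve_left' inv_solve_right' m_assoc)
    ultimately show thesis
      using that locally_maximal_product_free_cover[OF lm inv_closed[OF G(1)]] by metis
  qed
  then show ?thesis
  proof cases
    case mem
    moreover have "inv a \<noteq> a" using a G(1) by (metis r_inv)
    moreover have "inv a \<noteq> c" using inv_inv[of a] inv_c a c G by auto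
    ultimately show ?thesis by auto
  next
    case square
    have "a \<otimes> a \<otimes> a = \<one>" if "inv (a \<otimes> a) = a"
      using r_inv[of "a \<otimes> a"] G by (simp add: that)
    moreover have "inv (a \<otimes> a) \<noteq> c"
    proof
      assume "inv (a \<otimes> a) = c"
      then have "inv (inv (a \<otimes> a)) = inv c" by simp
      then show False using aa inv_c G by simp
    qed
    ultimately show ?thesis using square by blast
  next
    case prod
    have SG: "s \<in> carrier G" "t \<in> carrier G" using prod(1,2) G by auto
    have rotations: "a \<otimes> s \<otimes> t = \<one>" "s \<otimes> t \<otimes> a = \<one>" "t \<otimes> a \<otimes> s = \<one>"
      using prod(3) inv_comm[of a "s \<otimes> t"] inv_comm[of "a \<otimes> s" t] G SG by (simp_all add: m_assoc)
    have no_c: "x \<otimes> y \<otimes> c \<noteq> \<one>" if "x \<in> ?S" "y \<in> ?S" for x y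
      using inv_equality[of "x \<otimes> y" c] inv_c closed[OF that] that G by auto
    show ?thesis
      using prod(1,2) rotations no_c[of a a] no_c[of a b] no_c[of b a] aa c one G
        inv_equality[of b "a \<otimes> a"] inv_equality[of a "b \<otimes> b"]
      by (auto simp: m_assoc)
  next
    case quot
    then show ?thesis using closed[of a t] closed[of t a] by auto
  qed
qed

section \<open>Locally maximal product-free sets of powers of one element\<close>

lemma int_pow_mem_image_iff:
  fixes E :: "int set"
  assumes g: "g \<in> carrier G"
  shows "g [^] w \<in> (\<lambda>k. g [^] k) ` E \<longleftrightarrow> (\<exists>i\<in>E. int (ord g) dvd (w - i))"
  unfolding image_iff int_pow_eq_iff_dvd_diff[OF g] ..

lemma lmpf_int_pow_product_free:
  fixes E :: "int set"
  assumes lm: "locally_maximal_product_free G ((\<lambda>k. g [^] k) ` E)" and g: "g \<in> carrier G"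
    and "i \<in> E" "j \<in> E" "k \<in> E"
  shows "\<not> int (ord g) dvd (i + j - k)"
proof -
  have "g [^] i \<otimes> g [^] j \<notin> (\<lambda>k. g [^] k) ` E"
    using lm assms(3,4) unfolding locally_maximal_product_free_def product_free_def by blast
  then show ?thesis using assms(5) by (simp add: int_pow_mem_image_iff[OF g] flip: int_pow_mult[OF g])
qed

lemma lmpf_int_pow_cover:
  fixes E :: "int set"
  assumes lm: "locally_maximal_product_free G ((\<lambda>k. g [^] k) ` E)" and g: "g \<in> carrier G"
  shows "\<exists>i\<in>E. int (ord g) dvd (w - i) \<or> int (ord g) dvd (2 * w - i) \<or>
    (\<exists>j\<in>E. int (ord g) dvd (w - (i + j)) \<or> int (ord g) dvd (w + i - j))"
proof -
  have "g [^] w \<otimes> g [^] w = g [^] (2 * w)" "g [^] i \<otimes> g [^] j = g [^] (i + j)" for i j :: int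
    using int_pow_mult[OF g, of w w] int_pow_mult[OF g, of i j] by simp_all
  then show ?thesis
    using locally_maximal_product_free_cover[OF lm int_pow_closed[OF g, of w]] g
    by (auto simp: int_pow_mem_image_iff int_pow_eq_iff_dvd_diff add.commute)
qed

lemma lmpf_cyclic_exponents:
  assumes lm: "locally_maximal_product_free G ((\<lambda>k. g [^] k) ` {1, e, m})"
    and g: "g \<in> carrier G" and N: "int (ord g) = 2 * m" and m: "1 < m"
    and e: "e = -1 \<or> e = -2" and gen: "g \<in> generate G {g [^] e, g [^] m}"
  shows "(e = -1 \<and> (m = 3 \<or> m = 4)) \<or> (e = -2 \<and> m = 5)"
proof -
  note pf = lmpf_int_pow_product_free[OF lm g, unfolded N]
  note cov = lmpf_int_pow_cover[OF lm g, unfolded N]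
  have small: "-(2 * m) < x \<Longrightarrow> x < 2 * m \<Longrightarrow> 2 * m dvd x \<longleftrightarrow> x = 0" for x
    by (rule int_dvd_iff_eq_0_of_bounds)
  \<comment> \<open>Apart from the small cases, \<open>g\<^sup>3\<close> (or \<open>g\<^sup>4\<close>) is neither in \<open>S\<close> nor covered by it,
    except when \<open>e = -2\<close> and \<open>m\<close> is even: then \<open>g\<^sup>-\<^sup>2\<close> and \<open>g\<^sup>m\<close> generate only even powers.\<close>
  show ?thesis
  proof (cases "e = -1")
    case True
    consider "m = 2" | "m = 3 \<or> m = 4" | "m = 5" | "m = 6" | "m \<ge> 7" using m by linarith
    then show ?thesis
    proof cases
      case 1 then show ?thesis using pf[of 1 1 m] by simp
    next
      case 2 then show ?thesis using True by simp
    next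
      case 3 then show ?thesis using cov[of 3] True by simp
    next
      case 4 then show ?thesis using cov[of 4] True by simp
    next
      case 5 then show ?thesis using cov[of 3] True by (simp add: small)
    qed
  next
    case False
    then have e: "e = -2" using e by simp
    have "m = 2 \<or> m = 3 \<or> m = 4 \<or> m = 5 \<or> (even m \<and> m \<ge> 6) \<or> (odd m \<and> m \<ge> 7)"
      using m by presburger
    then consider "m = 2" | "m = 3" | "m = 4" | "m = 5" | "even m" "m \<ge> 6" | "odd m" "m \<ge> 7"
      by blast
    then show ?thesis
    proof cases
      case 1 then show ?thesis using pf[of 1 1 e] e by simp
    next
      case 2 then show ?thesis using pf[of 1 m e] e by simp
    next
      case 3 then show ?thesis using pf[of e e m] e by simp
    next
      case 4 then show ?thesis using e by simp
    next
      case 5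
      have "g [^] (2 * k) \<in> generate G {g \<otimes> g}" for k :: int
        using g by (auto simp: generate_pow int_pow_pow simp flip: int_pow_two)
      then have "{g [^] e, g [^] m} \<subseteq> generate G {g \<otimes> g}"
        using e \<open>even m\<close> by (metis dvd_def empty_subsetI insert_subset mult_minus1_right)
      moreover have "even (ord g)" using N by presburger
      ultimately show ?thesis using not_in_generate_of_even_powers g gen by blast
    next
      case 6 then show ?thesis using cov[of 4] e by (simp add: small)
    qed
  qed
qed

end

locale lmpf_power_set = group +
  fixes g :: 'a and E :: "int set"
  assumes generator_closed [simp]: "g \<in> carrier G"
    and lmpf: "locally_maximal_product_free G ((\<lambda>k. g [^] k) ` E)"
begin

abbreviation H where "H \<equiv> generate G {g}"

lemma subgroup_H: "subgroup H G"
  by (rule generate_is_subgroup) simp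

lemma mem_H_iff: "x \<in> H \<longleftrightarrow> (\<exists>k::int. x = g [^] k)"
  using generate_pow[OF generator_closed] by blast

lemma power_set_subset_H: "(\<lambda>k. g [^] k) ` E \<subseteq> H"
  using mem_H_iff by blast

lemma one_l_coset_H: "\<one> <# H = H"
  using subgroup_H by (simp add: lcos_mult_one subgroup.subset)

lemma conj_generator_exponent:
  assumes "y \<in> carrier G"
  obtains d :: int where "y \<otimes> g \<otimes> inv y = g [^] d"
proof -
  have "H \<lhd> G" using lmpf_subgroup_normal[OF lmpf subgroup_H power_set_subset_H] .
  then have "y \<otimes> g \<otimes> inv y \<in> H"
    using assms by (simp add: normal.inv_op_closed2 generate.incl)
  then show ?thesis using that mem_H_iff by blast
qed

lemma square_mult_power_mem:
  fixes d s j :: int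
  assumes y: "y \<in> carrier G" "y \<notin> H"
    and d: "y \<otimes> g \<otimes> inv y = g [^] d" and s: "y \<otimes> y = g [^] s"
  shows "g [^] (s + j * (d + 1)) \<in> (\<lambda>k. g [^] k) ` E"
proof -
  have "y \<otimes> g [^] j \<notin> H"
  proof
    assume "y \<otimes> g [^] j \<in> H"
    then obtain k :: int where "y \<otimes> g [^] j = g [^] k" using mem_H_iff by blast
    then have "y = g [^] (k - j)" using y by (simp add: int_pow_diff inv_solve_right)
    then show False using y mem_H_iff by blast
  qed
  then have "(y \<otimes> g [^] j) \<otimes> (y \<otimes> g [^] j) \<in> (\<lambda>k. g [^] k) ` E"
    using lmpf_square_mem_of_notin_subgroup[OF lmpf subgroup_H power_set_subset_H] y by simp
  moreover have "(y \<otimes> g [^] j) \<otimes> (y \<otimes> g [^] j) = (y \<otimes> g [^] j \<otimes> inv y) \<otimes> (y \<otimes> y) \<otimes> g [^] j"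
    using y by (simp add: m_assoc)
  moreover have "\<dots> = g [^] (s + j * (d + 1))"
    using y d s by (simp add: conj_int_pow int_pow_pow algebra_simps flip: int_pow_mult)
  ultimately show ?thesis by simp
qed

lemma outside_exponents:
  assumes y: "y \<in> carrier G" "y \<notin> H"
  obtains s t :: int where "s \<in> E" "t \<in> E" "y \<otimes> y = g [^] s" "y \<otimes> g \<otimes> inv y = g [^] (t - s - 1)"
    "\<And>j. g [^] (s + j * (t - s)) \<in> (\<lambda>k. g [^] k) ` E"
proof -
  obtain s where s: "s \<in> E" "y \<otimes> y = g [^] s"
    using lmpf_square_mem_of_notin_subgroup[OF lmpf subgroup_H power_set_subset_H y] by blast
  obtain d :: int where d: "y \<otimes> g \<otimes> inv y = g [^] d" using conj_generator_exponent y(1) by blast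
  obtain t :: int where t: "t \<in> E" "int (ord g) dvd s + d + 1 - t"
    using square_mult_power_mem[OF y d s(2), of 1] by (auto simp: int_pow_mem_image_iff add.assoc)
  have "g [^] d = g [^] (t - s - 1)"
    using t(2) by (simp add: int_pow_eq_iff_dvd_diff algebra_simps)
  then have d': "y \<otimes> g \<otimes> inv y = g [^] (t - s - 1)" using d by simp
  show ?thesis
    using that[OF s(1) t(1) s(2) d'] square_mult_power_mem[OF y d' s(2)] by simp
qed

lemma conj_inverts_generator:
  assumes E: "(E = {1, -1, 4} \<and> int (ord g) = 8) \<or> (E = {1, -2, 5} \<and> int (ord g) = 10)"
    and y: "y \<in> carrier G" "y \<notin> H"
  shows "y \<otimes> g \<otimes> inv y = inv g"
proof -
  obtain s t :: int where st: "s \<in> E" "t \<in> E" "y \<otimes> y = g [^] s"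
    and conj: "y \<otimes> g \<otimes> inv y = g [^] (t - s - 1)"
    and shift: "\<And>j. g [^] (s + j * (t - s)) \<in> (\<lambda>k. g [^] k) ` E"
    using outside_exponents[OF y] by blast
  have "s + 2 * (t - s) = 2 * t - s" "s + 3 * (t - s) = 3 * t - 2 * s" by simp_all
  then have "\<exists>i\<in>E. int (ord g) dvd 2 * t - s - i" "\<exists>i\<in>E. int (ord g) dvd 3 * t - 2 * s - i"
    using shift[of 2] shift[of 3] by (simp_all only: int_pow_mem_image_iff[OF generator_closed])
  then have "s = t"
    using E st(1,2) no_progression_mod_8[of s t] no_progression_mod_10[of s t] by (elim disjE) simp_all
  then show ?thesis using conj by (simp add: int_pow_neg)
qed

lemma two_cosets_cover:
  assumes E: "(E = {1, -1, 4} \<and> int (ord g) = 8) \<or> (E = {1, -2, 5} \<and> int (ord g) = 10)"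
  shows "\<exists>A. finite A \<and> card A \<le> 2 \<and> carrier G \<subseteq> A <#> H"
proof (cases "carrier G \<subseteq> H")
  case True
  then have "carrier G \<subseteq> {\<one>} <#> H"
    by (intro carrier_subset_set_mult_of_l_cosets) (auto simp: one_l_coset_H)
  then show ?thesis by (intro exI[of _ "{\<one>}"]) auto
next
  case False
  then obtain y where y: "y \<in> carrier G" "y \<notin> H" by blast
  have "\<not> int (ord g) dvd 2" using E by auto
  then have gg: "g \<otimes> g \<noteq> \<one>" by (simp flip: int_pow_two add: int_pow_eq_id)
  have "z \<in> y <# H" if z: "z \<in> carrier G" "z \<notin> H" for z
  proof -
    have "inv y \<otimes> z \<in> H"
      using inv_mult_mem_of_conj_inverts[OF subgroup_H _ gg conj_inverts_generator[OF E] y z]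
      by (simp add: generate.incl)
    moreover have "z = y \<otimes> (inv y \<otimes> z)" using y z by simp
    ultimately show ?thesis unfolding l_coset_def by blast
  qed
  then have "carrier G \<subseteq> {\<one>, y} <#> H"
    by (intro carrier_subset_set_mult_of_l_cosets) (auto simp: one_l_coset_H)
  then show ?thesis by (intro exI[of _ "{\<one>, y}"]) (auto simp: card_insert_le_m1)
qed

lemma square_odd_exponent:
  assumes E: "E = {1, -1, 3}" "int (ord g) = 6" and x: "x \<in> carrier G" "x \<notin> H"
  obtains b :: int where "odd b" "x \<otimes> x = g [^] b"
proof -
  have "x \<otimes> x \<in> (\<lambda>k. g [^] k) ` E"
    using lmpf_square_mem_of_notin_subgroup[OF lmpf subgroup_H power_set_subset_H x] .
  then obtain b where b: "b \<in> E" "x \<otimes> x = g [^] b" by blast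
  moreover have "odd b" using b(1) E(1) by auto
  ultimately show ?thesis using that by blast
qed

lemma conj_odd_exponent:
  assumes E: "E = {1, -1, 3}" "int (ord g) = 6" and q: "q \<in> carrier G"
  obtains d :: int where "odd d" "q \<otimes> g \<otimes> inv q = g [^] d"
proof (cases "q \<in> H")
  case True
  then obtain j :: int where "q = g [^] j" using mem_H_iff by blast
  then have "q \<otimes> g = g \<otimes> q"
    using int_pow_mult[OF generator_closed, of j 1] int_pow_mult[OF generator_closed, of 1 j]
    by (simp add: add.commute)
  then have "q \<otimes> g \<otimes> inv q = g [^] (1::int)" using q by (simp add: m_assoc)
  then show ?thesis using that[of 1] by simp
next
  case False
  obtain s t :: int where st: "s \<in> E" "t \<in> E" and "q \<otimes> g \<otimes> inv q = g [^] (t - s - 1)"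
    using outside_exponents[OF q False] by blast
  moreover have "odd (t - s - 1)" using st E(1) by auto
  ultimately show ?thesis using that by blast
qed

lemma commutator_odd_exponent:
  assumes E: "E = {1, -1, 3}" "int (ord g) = 6"
    and p: "p \<in> carrier G" "p \<notin> H" and q: "q \<in> carrier G" "q \<notin> H" and pq: "p \<otimes> q \<notin> H"
  obtains k :: int where "odd k" "commutator G p q = g [^] k"
proof -
  obtain a :: int where a: "odd a" "(p \<otimes> q) \<otimes> (p \<otimes> q) = g [^] a"
    using square_odd_exponent[OF E _ pq] p q by blast
  obtain b :: int where b: "odd b" "p \<otimes> p = g [^] b" using square_odd_exponent[OF E p] by blast
  obtain c :: int where c: "odd c" "q \<otimes> q = g [^] c" using square_odd_exponent[OF E q] by blast
  obtain d :: int where d: "odd d" "q \<otimes> g \<otimes> inv q = g [^] d" using conj_odd_exponent[OF E q(1)] by blast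
  have C: "commutator G p q \<in> carrier G" using p q by (simp add: commutator_def)
  have "q \<otimes> (p \<otimes> p) \<otimes> inv q = g [^] (d * b)"
    using b d q by (simp add: conj_int_pow int_pow_pow)
  then have "g [^] a = commutator G p q \<otimes> g [^] (d * b + c)"
    using square_of_product[OF p(1) q(1)] a c C by (simp add: int_pow_mult m_assoc)
  then have "commutator G p q = g [^] (a - (d * b + c))"
    using C by (simp add: inv_solve_right int_pow_diff)
  moreover have "odd (a - (d * b + c))" using a b c d by simp
  ultimately show ?thesis using that by blast
qed

lemma four_cosets_cover:
  assumes E: "E = {1, -1, 3}" "int (ord g) = 6"
  shows "\<exists>A. finite A \<and> card A \<le> 4 \<and> carrier G \<subseteq> A <#> H"
proof -
  have coset: "v \<in> x <# H" if x: "x \<in> carrier G" and v: "v \<in> carrier G" "x \<otimes> v \<in> H" for x v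
    using l_coset_of_square_mem[OF subgroup_H x _ v]
      lmpf_square_mem_subgroup[OF lmpf subgroup_H power_set_subset_H x] by blast
  consider (one) "carrier G \<subseteq> H"
    | (two) y where "y \<in> carrier G" "y \<notin> H" "\<And>z. z \<in> carrier G \<Longrightarrow> z \<in> H \<or> z \<in> y <# H"
    | (four) y z where "y \<in> carrier G" "y \<notin> H" "z \<in> carrier G" "z \<notin> H" "z \<notin> y <# H"
    by blast
  then show ?thesis
  proof cases
    case one
    then have "carrier G \<subseteq> {\<one>} <#> H"
      by (intro carrier_subset_set_mult_of_l_cosets) (auto simp: one_l_coset_H)
    then show ?thesis by (intro exI[of _ "{\<one>}"]) auto
  next
    case two
    then have "carrier G \<subseteq> {\<one>, y} <#> H"
      by (intro carrier_subset_set_mult_of_l_cosets) (auto simp: one_l_coset_H)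
    then show ?thesis by (intro exI[of _ "{\<one>, y}"]) (auto simp: card_insert_le_m1)
  next
    case four
    have "w \<in> H \<or> w \<in> y <# H \<or> w \<in> z <# H \<or> w \<in> (y \<otimes> z) <# H" if w: "w \<in> carrier G" for w
    proof (rule ccontr)
      assume "\<not> ?thesis"
      then have w_out: "w \<notin> H" "w \<notin> y <# H" "w \<notin> z <# H" "w \<notin> (y \<otimes> z) <# H" by auto
      have yz: "y \<otimes> z \<notin> H" using coset[of y z] four by blast
      have zw: "z \<otimes> w \<notin> H" using coset[of z w] four w w_out by blast
      have yzw: "y \<otimes> (z \<otimes> w) \<notin> H"
        using coset[of "y \<otimes> z" w] four w w_out by (auto simp: m_assoc)
      have yw: "y \<otimes> w \<notin> H" using coset[of y w] four w w_out by blast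
      obtain k1 :: int where k1: "odd k1" "commutator G y z = g [^] k1"
        using commutator_odd_exponent[OF E] four yz by blast
      obtain k2 :: int where k2: "odd k2" "commutator G y w = g [^] k2"
        using commutator_odd_exponent[OF E] four w w_out(1) yw by blast
      obtain k3 :: int where k3: "odd k3" "commutator G y (z \<otimes> w) = g [^] k3"
        using commutator_odd_exponent[OF E] four w zw yzw by blast
      obtain d :: int where d: "odd d" "z \<otimes> g \<otimes> inv z = g [^] d"
        using conj_odd_exponent[OF E] four by blast
      \<comment> \<open>\<open>[y, z w] = [y, z] \<cdot> z [y, w] z\<inverse>\<close> has odd exponent, but the right side has exponent
        \<open>k1 + d k2\<close>, which is even.\<close>
      have "g [^] k3 = g [^] (k1 + d * k2)"
        using commutator_mult_right[of y z w] four w k1 k2 k3 d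
        by (simp add: conj_int_pow int_pow_pow int_pow_mult)
      then have "6 dvd k3 - (k1 + d * k2)" using E(2) by (simp add: int_pow_eq_iff_dvd_diff)
      then have "even (k3 - (k1 + d * k2))" by (rule dvd_trans[rotated]) simp
      then show False using k1 k2 k3 d by simp
    qed
    then have "carrier G \<subseteq> {\<one>, y, z, y \<otimes> z} <#> H"
      by (intro carrier_subset_set_mult_of_l_cosets) (auto simp: one_l_coset_H)
    moreover have "card {\<one>, y, z, y \<otimes> z} \<le> 4" using card_length[of "[\<one>, y, z, y \<otimes> z]"] by simp
    ultimately show ?thesis by (intro exI[of _ "{\<one>, y, z, y \<otimes> z}"]) auto
  qed
qed

lemma card_carrier_le_24:
  assumes E: "(E = {1, -1, 3} \<and> int (ord g) = 6) \<or> (E = {1, -1, 4} \<and> int (ord g) = 8) \<or>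
    (E = {1, -2, 5} \<and> int (ord g) = 10)"
  shows "finite (carrier G) \<and> card (carrier G) \<le> 24"
proof -
  obtain A where A: "finite A" "carrier G \<subseteq> A <#> H" "card A * ord g \<le> 24" and "ord g \<noteq> 0"
    using E
  proof (elim disjE conjE)
    assume "E = {1, -1, 3}" "int (ord g) = 6"
    then show ?thesis using four_cosets_cover that by fastforce
  next
    assume "E = {1, -1, 4}" "int (ord g) = 8"
    then show ?thesis using two_cosets_cover that by fastforce
  next
    assume "E = {1, -2, 5}" "int (ord g) = 10"
    then show ?thesis using two_cosets_cover that by fastforce
  qed
  have "card H = ord g" by (simp add: generate_pow_card)
  then have "finite H" using \<open>ord g \<noteq> 0\<close> card.infinite by force
  then have fin: "finite (A <#> H)" and "card (A <#> H) \<le> card A * ord g"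
    using card_set_mult_le[OF A(1) \<open>finite H\<close>] \<open>card H = ord g\<close> by simp_all
  moreover have "card (carrier G) \<le> card (A <#> H)" using card_mono[OF fin A(2)] .
  ultimately show ?thesis using finite_subset[OF A(2) fin] A(3) by linarith
qed

end

context group begin

lemma card_le_24_of_lmpf_power_pair:
  fixes e :: int
  assumes lm: "locally_maximal_product_free G {g, h, c}"
    and g: "g \<in> carrier G" "ord g \<noteq> 2" and h: "h = g [^] e" "e = -1 \<or> e = -2"
    and c: "c \<otimes> c = \<one>" "c \<noteq> \<one>"
    and gen: "c \<in> generate G {g, h}" "g \<in> generate G {h, c}"
  shows "finite (carrier G) \<and> card (carrier G) \<le> 24"
proof -
  have "generate G {g, h} \<subseteq> generate G {g}"
    using g h by (intro generate_subgroup_incl generate_is_subgroup)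
      (auto simp: generate_pow intro: exI[of _ "1::int"])
  then obtain m where m: "m > 0" "int (ord g) = 2 * m" "c = g [^] m"
    using square_eq_one_in_generate_single[OF g(1) _ c] gen(1) by blast
  have "m \<noteq> 1" using m(2) g(2) by auto
  have S: "{g, h, c} = (\<lambda>k. g [^] k) ` {1, e, m}" using g h m by simp
  have em: "(e = -1 \<and> (m = 3 \<or> m = 4)) \<or> (e = -2 \<and> m = 5)"
    using lmpf_cyclic_exponents[OF lm[unfolded S] g(1) m(2)] m \<open>m \<noteq> 1\<close> h gen(2) by simp
  interpret lmpf_power_set G g "{1, e, m}"
    using g lm S by unfold_locales simp_all
  show ?thesis using card_carrier_le_24 em m(2) by auto
qed

lemma lmpf_with_involution_card_le_24_or_ord_3:
  assumes lm: "locally_maximal_product_free G {a, b, c}" and distinct: "a \<noteq> b" "a \<noteq> c" "b \<noteq> c"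
    and c: "involution G c" and a: "\<not> involution G a" and b: "\<not> involution G b"
    and gen: "\<And>T. T \<subseteq> {a, b, c} \<Longrightarrow> card T = 2 \<Longrightarrow> generate G T = generate G {a, b, c}"
  shows "(finite (carrier G) \<and> card (carrier G) \<le> 24) \<or> (ord a = 3 \<and> ord b = 3)"
proof -
  have pf: "product_free G {a, b, c}" using lm unfolding locally_maximal_product_free_def by blast
  then have G: "a \<in> carrier G" "b \<in> carrier G" "c \<in> carrier G" and one: "\<one> \<notin> {a, b, c}"
    using product_free_one_notin unfolding product_free_def by auto
  have pow2: "x [^] (2::nat) = x \<otimes> x" and pow3: "x [^] (3::nat) = x \<otimes> x \<otimes> x"
    if "x \<in> carrier G" for x
    using that by (simp_all add: numeral_2_eq_2 numeral_3_eq_3)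
  have cc: "c \<otimes> c = \<one>" "c \<noteq> \<one>"
    using c pow_ord_eq_1[OF G(3)] pow2[OF G(3)] one unfolding involution_def by auto
  have ord2: "ord x \<noteq> 2" and square: "x \<otimes> x \<noteq> \<one>" if "x \<in> {a, b}" for x
    using that a b G one ord_eq_prime[of x 2] pow2 unfolding involution_def by auto
  have ord3: "x \<otimes> x \<otimes> x = \<one> \<Longrightarrow> ord x = 3" if "x \<in> {a, b}" for x
    using that G one ord_eq_prime[of x 3] pow3 by auto
  have pair: "finite (carrier G) \<and> card (carrier G) \<le> 24"
    if gh: "{g, h} = {a, b}" and e: "h = g [^] e" "e = -1 \<or> e = -2" for g h and e :: int
  proof (rule card_le_24_of_lmpf_power_pair)
    have abc: "{g, h, c} = {a, b, c}" "{h, c} \<subseteq> {a, b, c}" "card {g, h} = 2" "card {h, c} = 2"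
      using gh distinct by (auto simp: doubleton_eq_iff)
    show "locally_maximal_product_free G {g, h, c}" using lm abc by simp
    have "g \<in> {a, b}" using gh by blast
    then show "g \<in> carrier G" "ord g \<noteq> 2" using G ord2 by auto
    show "c \<in> generate G {g, h}" "g \<in> generate G {h, c}"
      using gen[of "{g, h}"] gen[of "{h, c}"] abc gh by (auto intro: generate.incl)
  qed (use e cc in auto)
  have inv_pow: "inv x = x [^] (-1::int)" "inv (x \<otimes> x) = x [^] (-2::int)" if "x \<in> carrier G" for x
    using that by (simp_all add: int_pow_neg flip: int_pow_two)
  have lmba: "locally_maximal_product_free G {b, a, c}" using lm by (simp add: insert_commute)
  show ?thesis
    using lmpf_inv_cases[OF lm cc(1) square[of a]] lmpf_inv_cases[OF lmba cc(1) square[of b]]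
      ord3 pair[of a b] pair[of b a] inv_pow G by (auto simp: insert_commute)
qed

end

theorem lemma2p3:
  fixes G (structure) and S :: "'a set"
  assumes "group G"
    and "locally_maximal_product_free G S"
    and "card S = 3"
    and "\<forall>T. T \<subseteq> S \<and> card T = 2 \<longrightarrow> generate G T = generate G S"
    and "card {x \<in> S. involution G x} = 1"
  shows "(finite (carrier G) \<and> card (carrier G) \<le> 24) \<or>
         (\<exists>a b c. S = {a, b, c} \<and> group.ord G a = 3 \<and> group.ord G b = 3 \<and> involution G c)"
proof -
  interpret group G by (rule assms(1))
  obtain c where c: "{x \<in> S. involution G x} = {c}" using assms(5) by (rule card_1_singletonE)
  then have "c \<in> S" "finite S" using assms(3) by (auto simp: card_ge_0_finite)
  then have "card (S - {c}) = 2" using assms(3) by simp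
  then obtain a b where ab: "S - {c} = {a, b}" "a \<noteq> b" by (auto simp: card_2_iff)
  have S: "S = {a, b, c}" using ab \<open>c \<in> S\<close> by blast
  have "a \<noteq> c" "b \<noteq> c" using ab by auto
  moreover have "involution G c" "\<not> involution G a" "\<not> involution G b" using c ab by blast+
  ultimately have "(finite (carrier G) \<and> card (carrier G) \<le> 24) \<or> (ord a = 3 \<and> ord b = 3)"
    using lmpf_with_involution_card_le_24_or_ord_3[of a b c] assms(2,4) S ab(2) by simp
  then show ?thesis using S \<open>involution G c\<close> by blast
qed

end
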